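(* Let $G$ be a simple graph with vertex set $V$, $\mu$ a positive integer, and $\mathcal K$ a clique partition of $\mu G$. Let $V^*$ be the set of $\mathcal K$-essential vertices, $G^*=G[V^*]$ the induced subgraph, and $\mathcal K^*$ the multiset of nonempty restrictions $K[V^*]$ of cliques $K\in\mathcal K$ to $V^*$ (which, when $V^*\neq\emptyset$, is a clique partition of $\mu G^*$). Then $$\lambda(G)=-\frac{r(\mathcal K)}{\mu}\quad\text{if and only if}\quad V^*\ne\emptyset\ \text{and}\ \lambda(G^* )=-\frac{r(\mathcal K^* )}{\mu}.$$ Moreover, if $\lambda(G)=-r(\mathcal K)/\mu$, then $\lambda(G)=\lambda(G^* )$ and $r_u(\mathcal K^* )=r(\mathcal K)$ for all $u\in V^*$.
   Context: $\lambda(\cdot)$ is the smallest adjacency eigenvalue. A clique of $G$ is a complete subgraph on at least two vertices. A clique partition of $\mu G$ ($\mu$ a positive integer) is a finite multiset $\mathcal K$ of cliques of $G$ such that every edge of $G$ lies in exactly $\mu$ members of $\mathcal K$ (with multiplicity); $r_u(\mathcal K)$ is the number of members containing vertex $u$ and $r(\mathcal K)=\max_u r_u(\mathcal K)$. The $\mathcal K$-essential vertices are defined as follows: let $V^1=\{u\in V: r_u(\mathcal K)=r(\mathcal K)\}$, and for $i\ge1$ let $V^{i+1}=V^i\setminus\{v: V(K)\cap V^i=\{v\}\text{ for some }K\in\mathcal K\}$; the sequence stabilizes at a set $V^*$ (possibly empty), whose elements are the $\mathcal K$-essential vertices. Every clique of $\mathcal K$ is then either disjoint from $V^*$ or meets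 it in at least two vertices. *)

theory Defs
  imports Complex_Main "HOL-Library.Multiset"
begin

definition simple_graph :: "'a set \<Rightarrow> 'a set set \<Rightarrow> bool" where
  "simple_graph V E \<longleftrightarrow> finite V \<and> (\<forall>e\<in>E. e \<subseteq> V \<and> card e = 2)"

definition adj_eigenvalues :: "'a set \<Rightarrow> 'a set set \<Rightarrow> real set" where
  "adj_eigenvalues V E = {l. \<exists>x :: 'a \<Rightarrow> real. (\<exists>v\<in>V. x v \<noteq> 0) \<and>
      (\<forall>u\<in>V. (\<Sum>v\<in>{v\<in>V. {u, v} \<in> E}. x v) = l * x u)}"

definition lambda_min :: "'a set \<Rightarrow> 'a set set \<Rightarrow> real" where
  "lambda_min V E = Min (adj_eigenvalues V E)"

definition is_clique :: "'a set \<Rightarrow> 'a set set \<Rightarrow> 'a set \<Rightarrow> bool" where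
  "is_clique V E K \<longleftrightarrow> K \<subseteq> V \<and> finite K \<and> card K \<ge> 2 \<and>
      (\<forall>u\<in>K. \<forall>v\<in>K. u \<noteq> v \<longrightarrow> {u, v} \<in> E)"

definition clique_partition :: "'a set \<Rightarrow> 'a set set \<Rightarrow> nat \<Rightarrow> 'a set multiset \<Rightarrow> bool" where
  "clique_partition V E mu \<K> \<longleftrightarrow> (\<forall>K\<in>#\<K>. is_clique V E K) \<and>
      (\<forall>e\<in>E. size (filter_mset (\<lambda>K. e \<subseteq> K) \<K>) = mu)"

definition r_at :: "'a set multiset \<Rightarrow> 'a \<Rightarrow> nat" where
  "r_at \<K> u = size (filter_mset (\<lambda>K. u \<in> K) \<K>)"

definition r_max :: "'a set \<Rightarrow> 'a set multiset \<Rightarrow> nat" where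
  "r_max V \<K> = Max (r_at \<K> ` V)"

definition ess_step :: "'a set multiset \<Rightarrow> 'a set \<Rightarrow> 'a set" where
  "ess_step \<K> W = W - {v. \<exists>K\<in>#\<K>. K \<inter> W = {v}}"

text \<open>V^1, then iterate; the decreasing sequence stabilizes at its intersection.\<close>
definition essential :: "'a set \<Rightarrow> 'a set multiset \<Rightarrow> 'a set" where
  "essential V \<K> = (\<Inter>i. (ess_step \<K> ^^ i) {u\<in>V. r_at \<K> u = r_max V \<K>})"

definition induced_edges :: "'a set set \<Rightarrow> 'a set \<Rightarrow> 'a set set" where
  "induced_edges E W = {e\<in>E. e \<subseteq> W}"

definition restrict_partition :: "'a set multiset \<Rightarrow> 'a set \<Rightarrow> 'a set multiset" where
  "restrict_partition \<K> W = image_mset (\<lambda>K. K \<inter> W) (filter_mset (\<lambda>K. K \<inter> W \<noteq> {}) \<K>)"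

end

theory Submission
  imports Defs "Jordan_Normal_Form.Spectral_Radius"
begin

(*
  For a clique partition of mu G, counting the cliques through each vertex gives
    mu <x, A x> = (SUM K. (SUM u:K. x u)^2) - (SUM u. r_u (x u)^2),
  so every eigenvalue of A is at least -r/mu, where r = max r_u, and the eigenvectors attaining
  -r/mu are exactly the nonzero vectors that sum to zero on every clique and vanish at every u
  with r_u < r. Such a vector also vanishes at any vertex that is the only survivor of some
  clique during the peeling V^1, V^2, ..., so its support lies in the essential set V^*. On V^*
  every vertex has r_u = r, so the vector is an eigenvector of G^* for the bound of K^*, which is
  again -r/mu; conversely such eigenvectors of G^* extend by zero to G. Since -r/mu is a lower
  bound for both spectra, it is the least eigenvalue of G exactly when it is that of G^*.
*)

definition adj_sum :: "'a set \<Rightarrow> 'a set set \<Rightarrow> ('a \<Rightarrow> 'b::comm_monoid_add) \<Rightarrow> 'a \<Rightarrow> 'b" where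
  "adj_sum V E x u = (\<Sum>v\<in>{v\<in>V. {u, v} \<in> E}. x v)"

definition adj_eigenpair :: "'a set \<Rightarrow> 'a set set \<Rightarrow> 'b::field \<Rightarrow> ('a \<Rightarrow> 'b) \<Rightarrow> bool" where
  "adj_eigenpair V E l x \<longleftrightarrow> (\<exists>v\<in>V. x v \<noteq> 0) \<and> (\<forall>u\<in>V. adj_sum V E x u = l * x u)"

lemma adj_eigenvalues_eq: "adj_eigenvalues V E = {l. \<exists>x. adj_eigenpair V E l x}"
  unfolding adj_eigenvalues_def adj_eigenpair_def adj_sum_def ..

definition adjacency_matrix :: "nat \<Rightarrow> (nat \<Rightarrow> 'a) \<Rightarrow> 'a set set \<Rightarrow> 'b::field mat" where
  "adjacency_matrix n f E = mat n n (\<lambda>(i, j). if {f i, f j} \<in> E then 1 else 0)"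

lemma adjacency_matrix_carrier [simp]: "adjacency_matrix n f E \<in> carrier_mat n n"
  by (simp add: adjacency_matrix_def)

lemma adjacency_matrix_mult_vec:
  assumes bij: "bij_betw f {0..<n} V" and "i < n"
  shows "(adjacency_matrix n f E *\<^sub>v vec n (x \<circ> f)) $ i = adj_sum V E x (f i)"
proof -
  have "(adjacency_matrix n f E *\<^sub>v vec n (x \<circ> f)) $ i
      = (\<Sum>j\<in>{0..<n}. (\<lambda>v. if {f i, v} \<in> E then x v else 0) (f j))"
    using \<open>i < n\<close> by (auto simp: adjacency_matrix_def scalar_prod_def intro: sum.cong)
  also have "\<dots> = (\<Sum>v\<in>V. if {f i, v} \<in> E then x v else 0)"
    by (rule sum.reindex_bij_betw[OF bij])
  also have "\<dots> = adj_sum V E x (f i)"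
    using bij_betw_finite[OF bij] by (simp add: adj_sum_def sum.inter_filter)
  finally show ?thesis .
qed

lemma eigenvalue_adjacency_matrix_iff:
  assumes bij: "bij_betw f {0..<n} V"
  shows "eigenvalue (adjacency_matrix n f E) l \<longleftrightarrow> (\<exists>x. adj_eigenpair V E l x)"
proof
  assume "eigenvalue (adjacency_matrix n f E) l"
  then obtain w where w: "w \<in> carrier_vec n" "w \<noteq> 0\<^sub>v n"
    and eig: "adjacency_matrix n f E *\<^sub>v w = l \<cdot>\<^sub>v w"
    unfolding eigenvalue_def eigenvector_def by (auto simp: adjacency_matrix_def)
  define x where "x v = w $ inv_into {0..<n} f v" for v
  have w_eq: "w = vec n (x \<circ> f)"
    using w(1) bij by (auto simp: x_def bij_betw_inv_into_left)
  obtain i where i: "i < n" "w $ i \<noteq> 0"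
    using w by (metis carrier_vecD eq_vecI index_zero_vec)
  have "f i \<in> V" "x (f i) \<noteq> 0"
    using bij i w_eq by (auto dest: bij_betwE)
  moreover have "adj_sum V E x u = l * x u" if "u \<in> V" for u
  proof -
    obtain j where j: "j < n" "u = f j"
      using bij \<open>u \<in> V\<close> by (metis atLeastLessThan_iff bij_betw_iff_bijections)
    have "adj_sum V E x u = (adjacency_matrix n f E *\<^sub>v w) $ j"
      unfolding w_eq j(2) by (rule adjacency_matrix_mult_vec[OF bij j(1), symmetric])
    also have "\<dots> = l * x u"
      using eig j w_eq by simp
    finally show ?thesis .
  qed
  ultimately show "\<exists>x. adj_eigenpair V E l x"
    unfolding adj_eigenpair_def by blast
next
  assume "\<exists>x. adj_eigenpair V E l x"
  then obtain x where nz: "\<exists>v\<in>V. x v \<noteq> 0" and eig: "\<forall>u\<in>V. adj_sum V E x u = l * x u"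
    unfolding adj_eigenpair_def by blast
  define w where "w = vec n (x \<circ> f)"
  have "w \<noteq> 0\<^sub>v n"
    using nz bij by (auto simp: w_def bij_betw_iff_bijections vec_eq_iff)
  moreover have "adjacency_matrix n f E *\<^sub>v w = l \<cdot>\<^sub>v w"
  proof (rule eq_vecI)
    fix i assume "i < dim_vec (l \<cdot>\<^sub>v w)"
    then have i: "i < n" by (simp add: w_def)
    have "(adjacency_matrix n f E *\<^sub>v w) $ i = adj_sum V E x (f i)"
      unfolding w_def by (rule adjacency_matrix_mult_vec[OF bij i])
    also have "\<dots> = (l \<cdot>\<^sub>v w) $ i"
      using eig bij i by (auto simp: w_def dest: bij_betwE)
    finally show "(adjacency_matrix n f E *\<^sub>v w) $ i = (l \<cdot>\<^sub>v w) $ i" .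
  qed (simp add: adjacency_matrix_def w_def)
  ultimately show "eigenvalue (adjacency_matrix n f E) l"
    unfolding eigenvalue_def eigenvector_def
    by (intro exI[of _ w]) (simp add: w_def adjacency_matrix_def)
qed

lemma finite_adj_eigenvalues:
  assumes "finite V"
  shows "finite (adj_eigenvalues V E)"
proof -
  obtain f where bij: "bij_betw f {0..<card V} V"
    using assms ex_bij_betw_nat_finite by blast
  have "adj_eigenvalues V E = spectrum (adjacency_matrix (card V) f E :: real mat)"
    by (auto simp: adj_eigenvalues_eq spectrum_def eigenvalue_adjacency_matrix_iff[OF bij])
  then show ?thesis
    using card_finite_spectrum(1)[OF adjacency_matrix_carrier] by simp
qed

text \<open>The adjacency operator is symmetric, so its complex eigenvalues are real:
  \<open>\<Sum>\<^sub>u conj(x u) (A x) u\<close> equals both its own conjugate and \<open>z \<Sum>\<^sub>u |x u|\<^sup>2\<close>.\<close>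
lemma adj_eigenpair_complex_Reals:
  fixes x :: "'a \<Rightarrow> complex"
  assumes fin: "finite V" and eig: "adj_eigenpair V E z x"
  shows "z \<in> \<real>"
proof -
  define T where "T = (\<Sum>u\<in>V. cnj (x u) * adj_sum V E x u)"
  define S where "S = (\<Sum>u\<in>V. (cmod (x u))\<^sup>2)"
  have T_pairs: "T = (\<Sum>u\<in>V. \<Sum>v\<in>V. if {u, v} \<in> E then cnj (x u) * x v else 0)"
    unfolding T_def adj_sum_def using fin
    by (simp add: sum.inter_filter sum_distrib_left if_distrib cong: if_cong)
  have "cnj T = (\<Sum>v\<in>V. \<Sum>u\<in>V. if {u, v} \<in> E then x u * cnj (x v) else 0)"
    unfolding T_pairs by (subst sum.swap) (simp add: cnj_sum if_distrib cong: if_cong)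
  also have "\<dots> = T"
    unfolding T_pairs by (intro sum.cong refl) (auto simp: insert_commute mult.commute)
  finally have cnj_T: "cnj T = T" .
  have "T = (\<Sum>u\<in>V. z * of_real ((cmod (x u))\<^sup>2))"
    unfolding T_def
  proof (intro sum.cong refl)
    fix u assume "u \<in> V"
    then have "adj_sum V E x u = z * x u"
      using eig by (simp add: adj_eigenpair_def)
    then show "cnj (x u) * adj_sum V E x u = z * of_real ((cmod (x u))\<^sup>2)"
      using complex_norm_square[of "x u"] by (simp add: algebra_simps)
  qed
  then have T_eq: "T = z * of_real S"
    by (simp add: S_def sum_distrib_left)
  obtain v where "v \<in> V" "x v \<noteq> 0"
    using eig by (auto simp: adj_eigenpair_def)
  then have "S > 0"
    unfolding S_def using fin by (intro sum_pos2) auto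
  have "cnj z * of_real S = z * of_real S"
    using cnj_T T_eq by (metis complex_cnj_complex_of_real complex_cnj_mult)
  with \<open>S > 0\<close> show ?thesis
    by (simp add: Reals_cnj_iff)
qed

lemma adj_eigenvalue_of_complex_eigenpair:
  fixes x :: "'a \<Rightarrow> complex"
  assumes eig: "adj_eigenpair V E (of_real l) x"
  shows "l \<in> adj_eigenvalues V E"
proof -
  have eig_Re: "adj_sum V E (Re \<circ> x) u = l * Re (x u)"
    and eig_Im: "adj_sum V E (Im \<circ> x) u = l * Im (x u)" if "u \<in> V" for u
  proof -
    have "adj_sum V E x u = of_real l * x u"
      using eig that by (simp add: adj_eigenpair_def)
    then have "Re (adj_sum V E x u) = l * Re (x u)" "Im (adj_sum V E x u) = l * Im (x u)"
      by simp_all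
    then show "adj_sum V E (Re \<circ> x) u = l * Re (x u)" "adj_sum V E (Im \<circ> x) u = l * Im (x u)"
      by (simp_all add: adj_sum_def Re_sum Im_sum)
  qed
  obtain v where "v \<in> V" "x v \<noteq> 0"
    using eig by (auto simp: adj_eigenpair_def)
  then have "adj_eigenpair V E l (Re \<circ> x) \<or> adj_eigenpair V E l (Im \<circ> x)"
    using eig_Re eig_Im by (auto simp: adj_eigenpair_def complex_eq_iff)
  then show ?thesis
    unfolding adj_eigenvalues_eq by blast
qed

lemma adj_eigenvalues_nonempty:
  assumes "finite V" and "V \<noteq> {}"
  shows "adj_eigenvalues V E \<noteq> {}"
proof -
  obtain f where bij: "bij_betw f {0..<card V} V"
    using assms ex_bij_betw_nat_finite by blast
  have "card V > 0"
    using assms by auto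
  then obtain z where "eigenvalue (adjacency_matrix (card V) f E :: complex mat) z"
    using spectrum_non_empty[OF adjacency_matrix_carrier] unfolding spectrum_def by blast
  then obtain x where eig: "adj_eigenpair V E z x"
    using eigenvalue_adjacency_matrix_iff[OF bij] by blast
  then have "z = of_real (Re z)"
    using adj_eigenpair_complex_Reals[OF \<open>finite V\<close>] by (simp add: Reals_def)
  with eig have "Re z \<in> adj_eigenvalues V E"
    by (metis adj_eigenvalue_of_complex_eigenpair)
  then show ?thesis by blast
qed

lemma sum_mset_sum_swap:
  "(\<Sum>K\<in>#M. \<Sum>v\<in>A. f K v) = (\<Sum>v\<in>A. \<Sum>K\<in>#M. (f K v :: 'b::comm_monoid_add))"
  by (induction M) (simp_all add: sum.distrib)

lemma sum_mset_if_const: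
  "(\<Sum>K\<in>#M. if P K then c else 0) = of_nat (size (filter_mset P M)) * (c :: 'b::semiring_1)"
  by (induction M) (simp_all add: algebra_simps)

lemma sum_mset_nonneg:
  "(\<And>K. K \<in># M \<Longrightarrow> 0 \<le> f K) \<Longrightarrow> 0 \<le> (\<Sum>K\<in>#M. (f K :: 'b::ordered_comm_monoid_add))"
  by (induction M) auto

lemma sum_mset_nonneg_eq_0_iff:
  "(\<And>K. K \<in># M \<Longrightarrow> 0 \<le> f K) \<Longrightarrow>
    (\<Sum>K\<in>#M. (f K :: 'b::ordered_comm_monoid_add)) = 0 \<longleftrightarrow> (\<forall>K\<in>#M. f K = 0)"
  by (induction M) (simp_all add: add_nonneg_eq_0_iff sum_mset_nonneg)

text \<open>A clique partition without the condition \<open>card K \<ge> 2\<close>, which is not preserved by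
  restriction to a vertex subset.\<close>
definition weak_clique_partition :: "'a set \<Rightarrow> 'a set set \<Rightarrow> nat \<Rightarrow> 'a set multiset \<Rightarrow> bool" where
  "weak_clique_partition V E mu \<K> \<longleftrightarrow>
    (\<forall>K\<in>#\<K>. K \<subseteq> V \<and> (\<forall>u\<in>K. \<forall>v\<in>K. u \<noteq> v \<longrightarrow> {u, v} \<in> E)) \<and>
    (\<forall>e\<in>E. size (filter_mset (\<lambda>K. e \<subseteq> K) \<K>) = mu)"

lemma clique_partition_imp_weak: "clique_partition V E mu \<K> \<Longrightarrow> weak_clique_partition V E mu \<K>"
  unfolding clique_partition_def weak_clique_partition_def is_clique_def by blast

lemma weak_clique_partition_subset:
  "weak_clique_partition V E mu \<K> \<Longrightarrow> K \<in># \<K> \<Longrightarrow> K \<subseteq> V"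
  unfolding weak_clique_partition_def by blast

lemma size_filter_pair_subset:
  assumes "weak_clique_partition V E mu \<K>" and "u \<noteq> v"
  shows "size (filter_mset (\<lambda>K. {u, v} \<subseteq> K) \<K>) = (if {u, v} \<in> E then mu else 0)"
proof (cases "{u, v} \<in> E")
  case True
  then show ?thesis
    using assms(1) unfolding weak_clique_partition_def by (simp only: if_True)
next
  case False
  then show ?thesis
    using assms unfolding weak_clique_partition_def by (auto simp: filter_mset_eq_mempty_iff)
qed

lemma sum_clique_sums_containing:
  fixes x :: "'a \<Rightarrow> real"
  assumes wcp: "weak_clique_partition V E mu \<K>" and sg: "simple_graph V E" and "u \<in> V"
  shows "(\<Sum>K\<in>#\<K>. if u \<in> K then sum x K else 0) = real mu * adj_sum V E x u + real (r_at \<K> u) * x u"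
proof -
  have fin: "finite V"
    using sg by (simp add: simple_graph_def)
  have "{u, u} \<notin> E"
    using sg by (auto simp: simple_graph_def)
  have split: "(if u \<in> K then sum x K else 0) = (if u \<in> K then x u else 0)
      + (\<Sum>v\<in>V. if {u, v} \<subseteq> K \<and> v \<noteq> u then x v else 0)" if "K \<in># \<K>" for K
  proof -
    have "K \<subseteq> V" "finite K"
      using weak_clique_partition_subset[OF wcp that] fin finite_subset by auto
    show ?thesis
    proof (cases "u \<in> K")
      case True
      have "sum x (K - {u}) = sum x (V \<inter> (K - {u}))"
        using \<open>K \<subseteq> V\<close> by (intro arg_cong[of _ _ "sum x"]) auto
      also have "\<dots> = (\<Sum>v\<in>V. if {u, v} \<subseteq> K \<and> v \<noteq> u then x v else 0)"
        using fin True by (simp add: sum.inter_restrict)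
      finally show ?thesis
        using \<open>finite K\<close> True by (simp add: sum.remove[of K u])
    qed simp
  qed
  have pair: "(\<Sum>K\<in>#\<K>. if {u, v} \<subseteq> K \<and> v \<noteq> u then x v else 0) = (if {u, v} \<in> E then real mu * x v else 0)"
    for v
    using \<open>{u, u} \<notin> E\<close> size_filter_pair_subset[OF wcp, of u v]
    by (cases "v = u") (simp_all add: sum_mset_if_const)
  have "(\<Sum>K\<in>#\<K>. if u \<in> K then sum x K else 0) = real (r_at \<K> u) * x u
      + (\<Sum>v\<in>V. \<Sum>K\<in>#\<K>. if {u, v} \<subseteq> K \<and> v \<noteq> u then x v else 0)"
    by (simp add: image_mset_cong[OF split] sum_mset.distrib sum_mset_sum_swap sum_mset_if_const r_at_def)
  also have "\<dots> = real (r_at \<K> u) * x u + (\<Sum>v\<in>V. if {u, v} \<in> E then real mu * x v else 0)"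
    by (simp only: pair)
  also have "\<dots> = real (r_at \<K> u) * x u + real mu * adj_sum V E x u"
    using fin by (simp add: adj_sum_def sum.inter_filter sum_distrib_left if_distrib cong: if_cong)
  finally show ?thesis by simp
qed

lemma sum_squares_of_clique_sums:
  fixes x :: "'a \<Rightarrow> real"
  assumes wcp: "weak_clique_partition V E mu \<K>" and sg: "simple_graph V E"
  shows "(\<Sum>K\<in>#\<K>. (sum x K)\<^sup>2)
    = real mu * (\<Sum>u\<in>V. x u * adj_sum V E x u) + (\<Sum>u\<in>V. real (r_at \<K> u) * (x u)\<^sup>2)"
proof -
  have fin: "finite V"
    using sg by (simp add: simple_graph_def)
  have square: "(sum x K)\<^sup>2 = (\<Sum>u\<in>V. x u * (if u \<in> K then sum x K else 0))" if "K \<in># \<K>" for K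
  proof -
    have "(sum x K)\<^sup>2 = (\<Sum>u\<in>V \<inter> K. x u * sum x K)"
      using weak_clique_partition_subset[OF wcp that]
      by (simp add: power2_eq_square sum_distrib_right Int_absorb1)
    also have "\<dots> = (\<Sum>u\<in>V. x u * (if u \<in> K then sum x K else 0))"
      unfolding sum.inter_restrict[OF fin] by (intro sum.cong) auto
    finally show ?thesis .
  qed
  have "(\<Sum>K\<in>#\<K>. (sum x K)\<^sup>2) = (\<Sum>K\<in>#\<K>. \<Sum>u\<in>V. x u * (if u \<in> K then sum x K else 0))"
    by (rule arg_cong[where f = sum_mset], rule image_mset_cong) (rule square)
  also have "\<dots> = (\<Sum>u\<in>V. x u * (\<Sum>K\<in>#\<K>. if u \<in> K then sum x K else 0))"
    by (simp only: sum_mset_sum_swap sum_mset_distrib_left)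
  also have "\<dots> = (\<Sum>u\<in>V. real mu * (x u * adj_sum V E x u) + real (r_at \<K> u) * (x u)\<^sup>2)"
    using sum_clique_sums_containing[OF wcp sg]
    by (intro sum.cong refl) (simp add: algebra_simps power2_eq_square)
  also have "\<dots> = real mu * (\<Sum>u\<in>V. x u * adj_sum V E x u) + (\<Sum>u\<in>V. real (r_at \<K> u) * (x u)\<^sup>2)"
    by (simp only: sum.distrib sum_distrib_left)
  finally show ?thesis .
qed

lemma r_at_le_r_max: "finite V \<Longrightarrow> u \<in> V \<Longrightarrow> r_at \<K> u \<le> r_max V \<K>"
  unfolding r_max_def by simp

text \<open>Rayleigh-quotient identity behind the bound \<open>\<lambda> \<ge> -r/\<mu>\<close>: both sums on the right are
  nonnegative.\<close>
lemma adj_eigenpair_energy: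
  fixes x :: "'a \<Rightarrow> real"
  assumes wcp: "weak_clique_partition V E mu \<K>" and sg: "simple_graph V E"
    and eig: "adj_eigenpair V E l x"
  shows "(real mu * l + real (r_max V \<K>)) * (\<Sum>u\<in>V. (x u)\<^sup>2)
    = (\<Sum>K\<in>#\<K>. (sum x K)\<^sup>2) + (\<Sum>u\<in>V. (real (r_max V \<K>) - real (r_at \<K> u)) * (x u)\<^sup>2)"
proof -
  have "(\<Sum>u\<in>V. x u * adj_sum V E x u) = l * (\<Sum>u\<in>V. (x u)\<^sup>2)"
    using eig by (simp add: adj_eigenpair_def sum_distrib_left power2_eq_square algebra_simps)
  then show ?thesis
    using sum_squares_of_clique_sums[OF wcp sg, of x]
    by (simp add: algebra_simps sum_subtractf sum_distrib_left sum.distrib)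
qed

lemma adj_eigenpair_energy_terms_nonneg:
  fixes x :: "'a \<Rightarrow> real"
  assumes "finite V"
  shows "0 \<le> (\<Sum>K\<in>#\<K>. (sum x K)\<^sup>2)"
    and "0 \<le> (\<Sum>u\<in>V. (real (r_max V \<K>) - real (r_at \<K> u)) * (x u)\<^sup>2)"
  using r_at_le_r_max[OF assms] by (auto intro!: sum_mset_nonneg sum_nonneg)

lemma adj_eigenvalue_ge:
  assumes wcp: "weak_clique_partition V E mu \<K>" and sg: "simple_graph V E" and "mu > 0"
    and "l \<in> adj_eigenvalues V E"
  shows "- real (r_max V \<K>) / real mu \<le> l"
proof -
  have fin: "finite V"
    using sg by (simp add: simple_graph_def)
  obtain x where eig: "adj_eigenpair V E l x"
    using assms(4) by (auto simp: adj_eigenvalues_eq)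
  then obtain v where "v \<in> V" "x v \<noteq> 0"
    by (auto simp: adj_eigenpair_def)
  then have "0 < (\<Sum>u\<in>V. (x u)\<^sup>2)"
    using fin by (intro sum_pos2) auto
  moreover have "0 \<le> (real mu * l + real (r_max V \<K>)) * (\<Sum>u\<in>V. (x u)\<^sup>2)"
    unfolding adj_eigenpair_energy[OF wcp sg eig]
    using adj_eigenpair_energy_terms_nonneg[OF fin, where x=x and \<K>=\<K>] by (rule add_nonneg_nonneg)
  ultimately have "0 \<le> real mu * l + real (r_max V \<K>)"
    by (simp add: zero_le_mult_iff)
  with \<open>mu > 0\<close> show ?thesis
    by (simp add: field_simps)
qed

lemma adj_eigenpair_bound_iff:
  fixes x :: "'a \<Rightarrow> real"
  assumes wcp: "weak_clique_partition V E mu \<K>" and sg: "simple_graph V E" and "mu > 0"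
  shows "adj_eigenpair V E (- real (r_max V \<K>) / real mu) x \<longleftrightarrow>
    (\<exists>v\<in>V. x v \<noteq> 0) \<and> (\<forall>K\<in>#\<K>. sum x K = 0) \<and> (\<forall>u\<in>V. x u \<noteq> 0 \<longrightarrow> r_at \<K> u = r_max V \<K>)"
proof
  assume eig: "adj_eigenpair V E (- real (r_max V \<K>) / real mu) x"
  have fin: "finite V"
    using sg by (simp add: simple_graph_def)
  have "(\<Sum>K\<in>#\<K>. (sum x K)\<^sup>2) + (\<Sum>u\<in>V. (real (r_max V \<K>) - real (r_at \<K> u)) * (x u)\<^sup>2) = 0"
    using adj_eigenpair_energy[OF wcp sg eig] \<open>mu > 0\<close> by simp
  then have "(\<Sum>K\<in>#\<K>. (sum x K)\<^sup>2) = 0"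
    and "(\<Sum>u\<in>V. (real (r_max V \<K>) - real (r_at \<K> u)) * (x u)\<^sup>2) = 0"
    using adj_eigenpair_energy_terms_nonneg[OF fin, where x=x and \<K>=\<K>] by linarith+
  moreover have "\<forall>u\<in>V. 0 \<le> (real (r_max V \<K>) - real (r_at \<K> u)) * (x u)\<^sup>2"
    using r_at_le_r_max[OF fin] by simp
  ultimately have "\<forall>K\<in>#\<K>. sum x K = 0"
    and "\<forall>u\<in>V. (real (r_max V \<K>) - real (r_at \<K> u)) * (x u)\<^sup>2 = 0"
    by (simp_all add: sum_mset_nonneg_eq_0_iff sum_nonneg_eq_0_iff[OF fin])
  then show "(\<exists>v\<in>V. x v \<noteq> 0) \<and> (\<forall>K\<in>#\<K>. sum x K = 0) \<and> (\<forall>u\<in>V. x u \<noteq> 0 \<longrightarrow> r_at \<K> u = r_max V \<K>)"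
    using eig by (auto simp: adj_eigenpair_def)
next
  assume "(\<exists>v\<in>V. x v \<noteq> 0) \<and> (\<forall>K\<in>#\<K>. sum x K = 0) \<and> (\<forall>u\<in>V. x u \<noteq> 0 \<longrightarrow> r_at \<K> u = r_max V \<K>)"
  then have nz: "\<exists>v\<in>V. x v \<noteq> 0" and sums: "\<forall>K\<in>#\<K>. sum x K = 0"
    and supp: "\<forall>u\<in>V. x u \<noteq> 0 \<longrightarrow> r_at \<K> u = r_max V \<K>" by blast+
  have "adj_sum V E x u = - real (r_max V \<K>) / real mu * x u" if "u \<in> V" for u
  proof -
    have "(\<Sum>K\<in>#\<K>. if u \<in> K then sum x K else 0) = (\<Sum>K\<in>#\<K>. 0)"
      using sums by (intro arg_cong[where f = sum_mset] image_mset_cong) simp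
    then have "real mu * adj_sum V E x u = - real (r_at \<K> u) * x u"
      using sum_clique_sums_containing[OF wcp sg that, of x] by simp
    also have "\<dots> = - real (r_max V \<K>) * x u"
      using supp that by (cases "x u = 0") simp_all
    finally show ?thesis
      using \<open>mu > 0\<close> by (simp add: field_simps)
  qed
  with nz show "adj_eigenpair V E (- real (r_max V \<K>) / real mu) x"
    unfolding adj_eigenpair_def by blast
qed

lemma simple_graph_induced:
  "simple_graph V E \<Longrightarrow> W \<subseteq> V \<Longrightarrow> simple_graph W (induced_edges E W)"
  unfolding simple_graph_def induced_edges_def using finite_subset by blast

lemma r_at_restrict_partition:
  assumes "u \<in> W"
  shows "r_at (restrict_partition \<K> W) u = r_at \<K> u"
proof -
  have "filter_mset (\<lambda>K. K \<inter> W \<noteq> {} \<and> u \<in> K \<inter> W) \<K> = filter_mset (\<lambda>K. u \<in> K) \<K>"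
    using assms by (intro filter_mset_cong0) auto
  then show ?thesis
    unfolding r_at_def restrict_partition_def filter_mset_image_mset filter_filter_mset by simp
qed

lemma weak_clique_partition_restrict:
  assumes wcp: "weak_clique_partition V E mu \<K>" and sg: "simple_graph V E"
  shows "weak_clique_partition W (induced_edges E W) mu (restrict_partition \<K> W)"
proof -
  have "size (filter_mset (\<lambda>K. e \<subseteq> K) (restrict_partition \<K> W)) = mu"
    if "e \<in> induced_edges E W" for e
  proof -
    have "e \<in> E" "e \<subseteq> W" "e \<noteq> {}"
      using that sg unfolding induced_edges_def simple_graph_def by fastforce+
    then have "filter_mset (\<lambda>K. K \<inter> W \<noteq> {} \<and> e \<subseteq> K \<inter> W) \<K> = filter_mset (\<lambda>K. e \<subseteq> K) \<K>"
      by (intro filter_mset_cong0) auto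
    then show ?thesis
      using wcp \<open>e \<in> E\<close> unfolding weak_clique_partition_def restrict_partition_def
        filter_mset_image_mset filter_filter_mset by simp
  qed
  then show ?thesis
    using wcp unfolding weak_clique_partition_def restrict_partition_def induced_edges_def by auto
qed

lemma sum_restrict_partition_eq_0_iff:
  assumes "\<forall>K\<in>#\<K>. K \<subseteq> V" and "finite V" and supp: "\<forall>v\<in>V. x v \<noteq> 0 \<longrightarrow> v \<in> W"
  shows "(\<forall>K\<in>#restrict_partition \<K> W. sum x K = 0) \<longleftrightarrow> (\<forall>K\<in>#\<K>. sum x K = 0)"
proof -
  have "sum x K = sum x (K \<inter> W)" if "K \<in># \<K>" for K
  proof (rule sum.mono_neutral_right)
    have "K \<subseteq> V"
      using assms(1) that by blast
    then show "finite K"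
      using \<open>finite V\<close> by (rule finite_subset)
  qed (use assms that in auto)
  then show ?thesis
    unfolding restrict_partition_def by force
qed

lemma support_subset_ess_step:
  assumes "\<forall>K\<in>#\<K>. K \<subseteq> V \<and> sum x K = 0" and "finite V"
    and supp: "\<forall>v\<in>V. x v \<noteq> 0 \<longrightarrow> v \<in> W"
  shows "\<forall>v\<in>V. x v \<noteq> 0 \<longrightarrow> v \<in> ess_step \<K> W"
proof (intro ballI impI)
  fix v assume "v \<in> V" "x v \<noteq> 0"
  have "K \<inter> W \<noteq> {v}" if "K \<in># \<K>" for K
  proof
    assume K: "K \<inter> W = {v}"
    have "K \<subseteq> V" "sum x K = 0"
      using assms(1) that by auto
    then have "finite K"
      using \<open>finite V\<close> finite_subset by blast
    have "sum x (K - {v}) = 0"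
      using supp K \<open>K \<subseteq> V\<close> by (intro sum.neutral) blast
    moreover have "v \<in> K"
      using K by blast
    ultimately have "x v = 0"
      using \<open>finite K\<close> \<open>sum x K = 0\<close> by (simp add: sum.remove[of K v])
    with \<open>x v \<noteq> 0\<close> show False ..
  qed
  then show "v \<in> ess_step \<K> W"
    using supp \<open>v \<in> V\<close> \<open>x v \<noteq> 0\<close> unfolding ess_step_def by blast
qed

lemma support_subset_essential:
  assumes "\<forall>K\<in>#\<K>. K \<subseteq> V \<and> sum x K = 0" and "finite V"
    and "\<forall>v\<in>V. x v \<noteq> 0 \<longrightarrow> r_at \<K> v = r_max V \<K>"
  shows "\<forall>v\<in>V. x v \<noteq> 0 \<longrightarrow> v \<in> essential V \<K>"
proof -
  have "\<forall>v\<in>V. x v \<noteq> 0 \<longrightarrow> v \<in> (ess_step \<K> ^^ i) {u\<in>V. r_at \<K> u = r_max V \<K>}" for i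
  proof (induction i)
    case 0
    then show ?case
      using assms(3) by simp
  next
    case (Suc i)
    then show ?case
      using support_subset_ess_step[OF assms(1,2) Suc] by simp
  qed
  then show ?thesis
    unfolding essential_def by blast
qed

lemma essential_subset: "essential V \<K> \<subseteq> {u\<in>V. r_at \<K> u = r_max V \<K>}"
proof -
  have "essential V \<K> \<subseteq> (ess_step \<K> ^^ 0) {u\<in>V. r_at \<K> u = r_max V \<K>}"
    unfolding essential_def by blast
  then show ?thesis
    by simp
qed

lemma essential_subset_vertices: "essential V \<K> \<subseteq> V"
  by (rule subset_trans[OF essential_subset]) auto

lemma r_at_restrict_essential:
  assumes "u \<in> essential V \<K>"
  shows "r_at (restrict_partition \<K> (essential V \<K>)) u = r_max V \<K>"
proof -
  have "r_at \<K> u = r_max V \<K>"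
    using subsetD[OF essential_subset assms] by simp
  then show ?thesis
    using r_at_restrict_partition[OF assms] by simp
qed

lemma r_max_restrict_essential:
  assumes "essential V \<K> \<noteq> {}"
  shows "r_max (essential V \<K>) (restrict_partition \<K> (essential V \<K>)) = r_max V \<K>"
proof -
  have "r_at (restrict_partition \<K> (essential V \<K>)) ` essential V \<K> = (\<lambda>_. r_max V \<K>) ` essential V \<K>"
    using r_at_restrict_essential by (rule image_cong[OF refl])
  also have "\<dots> = {r_max V \<K>}"
    using assms by (simp add: image_constant_conv)
  finally show ?thesis
    unfolding r_max_def by simp
qed

lemma lambda_min_eq_bound_iff:
  assumes wcp: "weak_clique_partition V E mu \<K>" and sg: "simple_graph V E" and "mu > 0"
    and "V \<noteq> {}"
  shows "lambda_min V E = - real (r_max V \<K>) / real mu \<longleftrightarrow>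
    - real (r_max V \<K>) / real mu \<in> adj_eigenvalues V E"
proof -
  have fin: "finite V"
    using sg by (simp add: simple_graph_def)
  have fin_eig: "finite (adj_eigenvalues V E)"
    using fin by (rule finite_adj_eigenvalues)
  have "lambda_min V E \<in> adj_eigenvalues V E"
    unfolding lambda_min_def using fin_eig adj_eigenvalues_nonempty[OF fin \<open>V \<noteq> {}\<close>] by (rule Min_in)
  moreover have "- real (r_max V \<K>) / real mu \<le> lambda_min V E"
    using adj_eigenvalue_ge[OF wcp sg \<open>mu > 0\<close> calculation] .
  moreover have "lambda_min V E \<le> l" if "l \<in> adj_eigenvalues V E" for l
    unfolding lambda_min_def using fin_eig that by (rule Min_le)
  ultimately show ?thesis
    by (metis order_antisym)
qed

lemma adj_eigenpair_essential_bound_iff: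
  fixes x :: "'a \<Rightarrow> real"
  assumes wcp: "weak_clique_partition V E mu \<K>" and sg: "simple_graph V E" and "mu > 0"
  defines "Vs \<equiv> essential V \<K>"
  assumes "Vs \<noteq> {}"
  shows "adj_eigenpair Vs (induced_edges E Vs) (- real (r_max V \<K>) / real mu) x \<longleftrightarrow>
    (\<exists>v\<in>Vs. x v \<noteq> 0) \<and> (\<forall>K\<in>#restrict_partition \<K> Vs. sum x K = 0)"
proof -
  have r_max_Ks: "r_max Vs (restrict_partition \<K> Vs) = r_max V \<K>"
    using r_max_restrict_essential \<open>Vs \<noteq> {}\<close> unfolding Vs_def .
  have "\<forall>u\<in>Vs. r_at (restrict_partition \<K> Vs) u = r_max Vs (restrict_partition \<K> Vs)"
    unfolding r_max_Ks unfolding Vs_def by (intro ballI r_at_restrict_essential)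
  then show ?thesis
    using adj_eigenpair_bound_iff[OF weak_clique_partition_restrict[OF wcp sg, of Vs]
        simple_graph_induced[OF sg essential_subset_vertices[of V \<K>, folded Vs_def]] \<open>mu > 0\<close>, of x]
    unfolding r_max_Ks by blast
qed

lemma adj_eigenpair_bound_restrict_essential:
  fixes x :: "'a \<Rightarrow> real"
  assumes wcp: "weak_clique_partition V E mu \<K>" and sg: "simple_graph V E" and "mu > 0"
    and eig: "adj_eigenpair V E (- real (r_max V \<K>) / real mu) x"
  defines "Vs \<equiv> essential V \<K>"
  shows "adj_eigenpair Vs (induced_edges E Vs) (- real (r_max V \<K>) / real mu) x"
proof -
  have fin: "finite V"
    using sg by (simp add: simple_graph_def)
  have cliques_sub: "\<forall>K\<in>#\<K>. K \<subseteq> V"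
    using weak_clique_partition_subset[OF wcp] by blast
  have nz: "\<exists>v\<in>V. x v \<noteq> 0" and sums: "\<forall>K\<in>#\<K>. sum x K = 0"
    and "\<forall>v\<in>V. x v \<noteq> 0 \<longrightarrow> r_at \<K> v = r_max V \<K>"
    using eig adj_eigenpair_bound_iff[OF wcp sg \<open>mu > 0\<close>] by blast+
  then have supp: "\<forall>v\<in>V. x v \<noteq> 0 \<longrightarrow> v \<in> Vs"
    using support_subset_essential[OF _ fin] cliques_sub unfolding Vs_def by blast
  then have "Vs \<noteq> {}" "\<exists>v\<in>Vs. x v \<noteq> 0"
    using nz by blast+
  moreover have "\<forall>K\<in>#restrict_partition \<K> Vs. sum x K = 0"
    using sum_restrict_partition_eq_0_iff[OF cliques_sub fin supp] sums by blast
  ultimately show ?thesis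
    using adj_eigenpair_essential_bound_iff[OF wcp sg \<open>mu > 0\<close>] unfolding Vs_def by blast
qed

lemma adj_eigenpair_bound_extend_essential:
  fixes y :: "'a \<Rightarrow> real"
  assumes wcp: "weak_clique_partition V E mu \<K>" and sg: "simple_graph V E" and "mu > 0"
  defines "Vs \<equiv> essential V \<K>"
  assumes eig: "adj_eigenpair Vs (induced_edges E Vs) (- real (r_max V \<K>) / real mu) y"
  shows "adj_eigenpair V E (- real (r_max V \<K>) / real mu) (\<lambda>v. if v \<in> Vs then y v else 0)"
    (is "adj_eigenpair V E _ ?x")
proof -
  have fin: "finite V"
    using sg by (simp add: simple_graph_def)
  have Vs_sub: "Vs \<subseteq> {u\<in>V. r_at \<K> u = r_max V \<K>}"
    unfolding Vs_def by (rule essential_subset)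
  have "Vs \<noteq> {}"
    using eig by (auto simp: adj_eigenpair_def)
  then have nz: "\<exists>v\<in>Vs. y v \<noteq> 0" and sums: "\<forall>K\<in>#restrict_partition \<K> Vs. sum y K = 0"
    using eig adj_eigenpair_essential_bound_iff[OF wcp sg \<open>mu > 0\<close>] unfolding Vs_def by blast+
  have supp: "\<forall>v\<in>V. ?x v \<noteq> 0 \<longrightarrow> v \<in> Vs"
    by simp
  have "\<forall>K\<in>#restrict_partition \<K> Vs. sum ?x K = 0"
  proof
    fix K assume K: "K \<in># restrict_partition \<K> Vs"
    then have "K \<subseteq> Vs"
      unfolding restrict_partition_def by auto
    then have "sum ?x K = sum y K"
      by (intro sum.cong) auto
    with sums K show "sum ?x K = 0"
      by simp
  qed
  then have "\<forall>K\<in>#\<K>. sum ?x K = 0"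
    using sum_restrict_partition_eq_0_iff[OF _ fin supp] weak_clique_partition_subset[OF wcp] by blast
  moreover have "\<exists>v\<in>V. ?x v \<noteq> 0" "\<forall>v\<in>V. ?x v \<noteq> 0 \<longrightarrow> r_at \<K> v = r_max V \<K>"
    using nz Vs_sub by auto
  ultimately show ?thesis
    using adj_eigenpair_bound_iff[OF wcp sg \<open>mu > 0\<close>] by blast
qed

lemma lambda_min_essential_eq_bound_iff:
  assumes wcp: "weak_clique_partition V E mu \<K>" and sg: "simple_graph V E" and "mu > 0"
  defines "Vs \<equiv> essential V \<K>"
  assumes "Vs \<noteq> {}"
  shows "lambda_min Vs (induced_edges E Vs) = - real (r_max V \<K>) / real mu \<longleftrightarrow>
    - real (r_max V \<K>) / real mu \<in> adj_eigenvalues Vs (induced_edges E Vs)"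
  using lambda_min_eq_bound_iff[OF weak_clique_partition_restrict[OF wcp sg]
      simple_graph_induced[OF sg essential_subset_vertices] \<open>mu > 0\<close> \<open>Vs \<noteq> {}\<close>[unfolded Vs_def]]
  unfolding Vs_def r_max_restrict_essential[OF \<open>Vs \<noteq> {}\<close>[unfolded Vs_def]] .

lemma bound_adj_eigenvalue_iff_essential:
  assumes wcp: "weak_clique_partition V E mu \<K>" and sg: "simple_graph V E" and "mu > 0"
  defines "Vs \<equiv> essential V \<K>" and "c \<equiv> - real (r_max V \<K>) / real mu"
  shows "c \<in> adj_eigenvalues V E \<longleftrightarrow> c \<in> adj_eigenvalues Vs (induced_edges E Vs)"
  using adj_eigenpair_bound_restrict_essential[OF wcp sg \<open>mu > 0\<close>]
    adj_eigenpair_bound_extend_essential[OF wcp sg \<open>mu > 0\<close>]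
  unfolding adj_eigenvalues_eq Vs_def c_def by blast

theorem mainTheorem4:
  fixes V :: "'a set" and E :: "'a set set" and mu :: nat and \<K> :: "'a set multiset"
  assumes "simple_graph V E" and "V \<noteq> {}" and "mu > 0"
    and "clique_partition V E mu \<K>"
  defines "Vs \<equiv> essential V \<K>"
  defines "Es \<equiv> induced_edges E Vs"
  defines "Ks \<equiv> restrict_partition \<K> Vs"
  shows "(lambda_min V E = - real (r_max V \<K>) / real mu \<longleftrightarrow>
           Vs \<noteq> {} \<and> lambda_min Vs Es = - real (r_max Vs Ks) / real mu)
       \<and> (lambda_min V E = - real (r_max V \<K>) / real mu \<longrightarrow>
           lambda_min V E = lambda_min Vs Es \<and> (\<forall>u\<in>Vs. r_at Ks u = r_max V \<K>))"
proof -
  have wcp: "weak_clique_partition V E mu \<K>"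
    using assms(4) by (rule clique_partition_imp_weak)
  define c where "c = - real (r_max V \<K>) / real mu"
  have lambda_iff: "lambda_min V E = c \<longleftrightarrow> c \<in> adj_eigenvalues Vs Es"
    using lambda_min_eq_bound_iff[OF wcp assms(1,3,2)] bound_adj_eigenvalue_iff_essential[OF wcp assms(1,3)]
    unfolding c_def Vs_def Es_def by simp
  have Vs_ne: "Vs \<noteq> {}" if "c \<in> adj_eigenvalues Vs Es"
    using that by (auto simp: adj_eigenvalues_def)
  have r_max_Ks: "r_max Vs Ks = r_max V \<K>" if "Vs \<noteq> {}"
    using r_max_restrict_essential that unfolding Vs_def Ks_def .
  have lambda_Vs_iff: "lambda_min Vs Es = c \<longleftrightarrow> c \<in> adj_eigenvalues Vs Es" if "Vs \<noteq> {}"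
    using lambda_min_essential_eq_bound_iff[OF wcp assms(1,3)] that unfolding c_def Vs_def Es_def by blast
  have "\<forall>u\<in>Vs. r_at Ks u = r_max V \<K>"
    unfolding Ks_def Vs_def by (intro ballI r_at_restrict_essential)
  moreover have "lambda_min V E = c \<longleftrightarrow> Vs \<noteq> {} \<and> lambda_min Vs Es = - real (r_max Vs Ks) / real mu"
    using lambda_iff Vs_ne lambda_Vs_iff r_max_Ks unfolding c_def by metis
  moreover have "lambda_min V E = lambda_min Vs Es" if "lambda_min V E = c"
    using that lambda_iff Vs_ne lambda_Vs_iff by metis
  ultimately show ?thesis
    unfolding c_def by blast
qed

end
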